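(* For every $n\ge1$, ${\rm gp}_{\rm t}(S_3^n)={\rm gp}_{\rm d}(S_3^n)=3$, and $\#{\rm gp}_{\rm t}(S_3^n)=\#{\rm gp}_{\rm d}(S_3^n)=1$.
   Context: For $p\ge3$, $n\ge1$, the Sierpiński graph $S_p^n$ has vertex set $\{0,1,\dots,p-1\}^n$, a vertex written $i_1\cdots i_n$; vertices $i_1\cdots i_n$ and $j_1\cdots j_n$ are adjacent iff there is $h$ with $i_t=j_t$ for $t<h$, $i_h\ne j_h$, and $i_t=j_h$, $j_t=i_h$ for $t>h$. For $X\subseteq V(G)$, $u,v$ are $X$-positionable if every shortest $u,v$-path $P$ has $V(P)\cap X\subseteq\{u,v\}$. $X$ is a dual general position set if every two vertices of $X$ are $X$-positionable and every two vertices of $V(G)\setminus X$ are $X$-positionable; a total general position set if every two vertices of $G$ are $X$-positionable. ${\rm gp}_{\rm d},{\rm gp}_{\rm t}$ are the maximum sizes and $\#{\rm gp}_{\rm d},\#{\rm gp}_{\rm t}$ the numbers of sets attaining them. *)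

theory Defs
  imports Main
begin

definition is_path :: "'a set \<Rightarrow> ('a \<Rightarrow> 'a \<Rightarrow> bool) \<Rightarrow> 'a \<Rightarrow> 'a \<Rightarrow> 'a list \<Rightarrow> bool" where
  "is_path V adj u v P \<longleftrightarrow> P \<noteq> [] \<and> hd P = u \<and> last P = v \<and> distinct P \<and> set P \<subseteq> V \<and>
     (\<forall>i. Suc i < length P \<longrightarrow> adj (P ! i) (P ! Suc i))"

definition is_shortest_path :: "'a set \<Rightarrow> ('a \<Rightarrow> 'a \<Rightarrow> bool) \<Rightarrow> 'a \<Rightarrow> 'a \<Rightarrow> 'a list \<Rightarrow> bool" where
  "is_shortest_path V adj u v P \<longleftrightarrow> is_path V adj u v P \<and>
     (\<forall>Q. is_path V adj u v Q \<longrightarrow> length P \<le> length Q)"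

definition positionable :: "'a set \<Rightarrow> ('a \<Rightarrow> 'a \<Rightarrow> bool) \<Rightarrow> 'a set \<Rightarrow> 'a \<Rightarrow> 'a \<Rightarrow> bool" where
  "positionable V adj X u v \<longleftrightarrow>
     (\<forall>P. is_shortest_path V adj u v P \<longrightarrow> set P \<inter> X \<subseteq> {u, v})"

definition dual_gp_set :: "'a set \<Rightarrow> ('a \<Rightarrow> 'a \<Rightarrow> bool) \<Rightarrow> 'a set \<Rightarrow> bool" where
  "dual_gp_set V adj X \<longleftrightarrow> X \<subseteq> V \<and>
     (\<forall>u\<in>X. \<forall>v\<in>X. positionable V adj X u v) \<and>
     (\<forall>u\<in>V - X. \<forall>v\<in>V - X. positionable V adj X u v)"

definition total_gp_set :: "'a set \<Rightarrow> ('a \<Rightarrow> 'a \<Rightarrow> bool) \<Rightarrow> 'a set \<Rightarrow> bool" where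
  "total_gp_set V adj X \<longleftrightarrow> X \<subseteq> V \<and> (\<forall>u\<in>V. \<forall>v\<in>V. positionable V adj X u v)"

definition gp_d :: "'a set \<Rightarrow> ('a \<Rightarrow> 'a \<Rightarrow> bool) \<Rightarrow> nat" where
  "gp_d V adj = Max (card ` {X. dual_gp_set V adj X})"

definition gp_t :: "'a set \<Rightarrow> ('a \<Rightarrow> 'a \<Rightarrow> bool) \<Rightarrow> nat" where
  "gp_t V adj = Max (card ` {X. total_gp_set V adj X})"

definition num_gp_d :: "'a set \<Rightarrow> ('a \<Rightarrow> 'a \<Rightarrow> bool) \<Rightarrow> nat" where
  "num_gp_d V adj = card {X. dual_gp_set V adj X \<and> card X = gp_d V adj}"

definition num_gp_t :: "'a set \<Rightarrow> ('a \<Rightarrow> 'a \<Rightarrow> bool) \<Rightarrow> nat" where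
  "num_gp_t V adj = card {X. total_gp_set V adj X \<and> card X = gp_t V adj}"

(* Sierpinski graph S_p^n: vertices are words of length n over {0..<p};
   indices are 0-based here (position h in the paper is position h-1 here). *)

definition sierp_V :: "nat \<Rightarrow> nat \<Rightarrow> nat list set" where
  "sierp_V p n = {xs. length xs = n \<and> set xs \<subseteq> {0..<p}}"

definition sierp_adj :: "nat \<Rightarrow> nat list \<Rightarrow> nat list \<Rightarrow> bool" where
  "sierp_adj n i j \<longleftrightarrow> (\<exists>h<n. (\<forall>t<h. i ! t = j ! t) \<and> i ! h \<noteq> j ! h \<and>
      (\<forall>t. h < t \<and> t < n \<longrightarrow> i ! t = j ! h \<and> j ! t = i ! h))"

end

(*
  Words of S_p^n that agree except in their last letter form a clique (a copy of K_p); every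
  other edge is a bridge, each vertex carries at most one bridge, and the vertices without a
  bridge are exactly the p extreme vertices c...c. An extreme vertex is simplicial, so it is
  never an inner vertex of a shortest path, and the extreme vertices form a total general
  position set. Conversely, a non-extreme vertex x with bridge neighbour y and clique mate a is
  the middle vertex of the shortest path a, x, y. This excludes x from every total general
  position set, and for p >= 3, chasing the shortest paths a, x, y, c and y, x, a, z of length
  three (c a clique mate of y, a non-extreme, z the bridge neighbour of a) excludes it from every
  dual one. Hence for both notions the optimal sets are exactly the subsets of the extreme
  vertices, and the unique maximum one is the set of all of them.
*)

theory Submission
  imports Defs
begin

lemma is_path_iff_successively:
  "is_path V adj u v P \<longleftrightarrow>
     P \<noteq> [] \<and> hd P = u \<and> last P = v \<and> distinct P \<and> set P \<subseteq> V \<and> successively adj P"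
  by (simp add: is_path_def successively_conv_nth)

lemma is_path_length_le_3_cases:
  assumes "is_path V adj u v Q" "length Q \<le> 3"
  obtains "Q = [u]" "u = v"
  | "Q = [u, v]" "adj u v"
  | w where "Q = [u, w, v]" "w \<in> V" "adj u w" "adj w v"
proof -
  consider a where "Q = [a]" | a b where "Q = [a, b]" | a b c where "Q = [a, b, c]"
    using assms by (cases Q; cases "tl Q"; cases "tl (tl Q)") (auto simp: is_path_def)
  then show thesis
    using assms(1) that by cases (auto simp: is_path_iff_successively)
qed

lemma is_shortest_path_3I:
  assumes "u \<in> V" "x \<in> V" "v \<in> V" "distinct [u, x, v]" "adj u x" "adj x v" "\<not> adj u v"
  shows "is_shortest_path V adj u v [u, x, v]"
  unfolding is_shortest_path_def
proof (intro conjI allI impI)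
  show "is_path V adj u v [u, x, v]"
    using assms by (simp add: is_path_iff_successively)
  fix Q assume Q: "is_path V adj u v Q"
  show "length [u, x, v] \<le> length Q"
  proof (rule ccontr)
    assume "\<not> ?thesis"
    with Q show False
      by (elim is_path_length_le_3_cases) (use assms in auto)
  qed
qed

lemma is_shortest_path_4I:
  assumes "u \<in> V" "x \<in> V" "y \<in> V" "v \<in> V" "distinct [u, x, y, v]"
    and "adj u x" "adj x y" "adj y v" "\<not> adj u v"
    and no_common_neighbour: "\<And>w. w \<in> V \<Longrightarrow> adj u w \<Longrightarrow> adj w v \<Longrightarrow> False"
  shows "is_shortest_path V adj u v [u, x, y, v]"
  unfolding is_shortest_path_def
proof (intro conjI allI impI)
  show "is_path V adj u v [u, x, y, v]"
    using assms by (simp add: is_path_iff_successively)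
  fix Q assume Q: "is_path V adj u v Q"
  show "length [u, x, y, v] \<le> length Q"
  proof (rule ccontr)
    assume "\<not> ?thesis"
    with Q show False
      by (elim is_path_length_le_3_cases) (use assms in auto)
  qed
qed

definition simplicial :: "'a set \<Rightarrow> ('a \<Rightarrow> 'a \<Rightarrow> bool) \<Rightarrow> 'a \<Rightarrow> bool" where
  "simplicial V adj z \<longleftrightarrow> (\<forall>a\<in>V. \<forall>b\<in>V. adj a z \<longrightarrow> adj z b \<longrightarrow> a \<noteq> b \<longrightarrow> adj a b)"

lemma shortest_path_simplicial_endpoint:
  assumes sp: "is_shortest_path V adj u v P" and z: "simplicial V adj z" "z \<in> set P"
  shows "z = u \<or> z = v"
proof (rule ccontr)
  assume interior: "\<not> (z = u \<or> z = v)"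
  have path: "is_path V adj u v P" using sp by (simp add: is_shortest_path_def)
  obtain ys zs where P: "P = ys @ z # zs" using z(2) by (meson split_list)
  obtain xs a where ys: "ys = xs @ [a]"
    using path interior P by (cases ys rule: rev_cases) (auto simp: is_path_def)
  obtain b ws where zs: "zs = b # ws"
    using path interior P by (cases zs) (auto simp: is_path_def)
  have "a \<in> V" "b \<in> V" "adj a z" "adj z b" "a \<noteq> b"
    using path unfolding P ys zs is_path_iff_successively by (auto simp: successively_append_iff)
  then have "adj a b" using z(1) by (simp add: simplicial_def)
  then have "is_path V adj u v (xs @ a # b # ws)"
    using path unfolding P ys zs is_path_iff_successively
    by (auto simp: successively_append_iff hd_append split: if_splits)
  then have "length P \<le> length (xs @ a # b # ws)"
    using sp unfolding is_shortest_path_def by blast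
  then show False by (simp add: P ys zs)
qed

lemma positionable_interiorD:
  assumes "positionable V adj X u v" "is_shortest_path V adj u v P" "z \<in> set P" "z \<noteq> u" "z \<noteq> v"
  shows "z \<notin> X"
  using assms unfolding positionable_def by blast

lemma dual_gp_set_shortest_path_interior:
  assumes X: "dual_gp_set V adj X" and sp: "is_shortest_path V adj u v P"
    and z: "z \<in> set P" "z \<in> X" "z \<noteq> u" "z \<noteq> v"
  shows "u \<in> X \<longleftrightarrow> v \<notin> X"
proof -
  have "u \<in> V" "v \<in> V"
    using sp unfolding is_shortest_path_def is_path_def by auto
  moreover have "\<not> positionable V adj X u v"
    using positionable_interiorD[OF _ sp z(1,3,4)] z(2) by blast
  ultimately show ?thesis
    using X unfolding dual_gp_set_def by blast
qed

lemma total_gp_set_subset: "total_gp_set V adj Y \<Longrightarrow> X \<subseteq> Y \<Longrightarrow> total_gp_set V adj X"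
  unfolding total_gp_set_def positionable_def by blast

lemma dual_gp_set_if_total_gp_set: "total_gp_set V adj X \<Longrightarrow> dual_gp_set V adj X"
  unfolding total_gp_set_def dual_gp_set_def by blast

section \<open>Cliques and bridges of Sierpinski graphs\<close>

lemma sierp_V_length: "u \<in> sierp_V p n \<Longrightarrow> length u = n"
  by (simp add: sierp_V_def)

lemma sierp_adj_sym: "sierp_adj n u v \<Longrightarrow> sierp_adj n v u"
  unfolding sierp_adj_def by (metis (no_types, lifting))

lemma sierp_adj_irrefl: "\<not> sierp_adj n u u"
  by (simp add: sierp_adj_def)

lemma butlast_eq_iff_nth:
  "length u = n \<Longrightarrow> length v = n \<Longrightarrow> butlast u = butlast v \<longleftrightarrow> (\<forall>t < n - 1. u ! t = v ! t)"
  by (auto simp: list_eq_iff_nth_eq nth_butlast)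

lemma eq_iff_butlast_eq_and_last:
  "length u = n \<Longrightarrow> length v = n \<Longrightarrow> n \<ge> 1 \<Longrightarrow>
     u = v \<longleftrightarrow> butlast u = butlast v \<and> u ! (n - 1) = v ! (n - 1)"
  by (metis append_butlast_last_id last_conv_nth length_0_conv not_one_le_zero)

lemma sierp_adj_if_butlast_eq:
  assumes "length u = n" "length v = n" "butlast u = butlast v" "u \<noteq> v"
  shows "sierp_adj n u v"
proof -
  have n: "n \<ge> 1" using assms by (cases n) auto
  have "\<forall>t < n - 1. u ! t = v ! t" using assms butlast_eq_iff_nth by blast
  moreover have "u ! (n - 1) \<noteq> v ! (n - 1)"
    using assms n eq_iff_butlast_eq_and_last by blast
  ultimately show ?thesis
    unfolding sierp_adj_def using n by (intro exI[of _ "n - 1"]) auto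
qed

definition sierp_bridge :: "nat \<Rightarrow> nat list \<Rightarrow> nat list \<Rightarrow> bool" where
  "sierp_bridge n u v \<longleftrightarrow> sierp_adj n u v \<and> butlast u \<noteq> butlast v"

lemma sierp_bridge_sym: "sierp_bridge n u v \<Longrightarrow> sierp_bridge n v u"
  by (auto simp: sierp_bridge_def intro: sierp_adj_sym)

lemma sierp_bridgeD:
  assumes bridge: "sierp_bridge n u w" and len: "length u = n" "length w = n"
  obtains h where "h < n - 1" "u ! h \<noteq> u ! (n - 1)" "\<forall>t. h < t \<and> t < n - 1 \<longrightarrow> u ! t = u ! (n - 1)"
    "\<forall>t < n. w ! t = (if t < h then u ! t else if t = h then u ! (n - 1) else u ! h)"
proof -
  obtain h where h: "h < n" "\<forall>t<h. u ! t = w ! t" "u ! h \<noteq> w ! h"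
      "\<forall>t. h < t \<and> t < n \<longrightarrow> u ! t = w ! h \<and> w ! t = u ! h"
    using bridge unfolding sierp_bridge_def sierp_adj_def by blast
  have "h \<noteq> n - 1"
  proof
    assume "h = n - 1"
    then have "butlast u = butlast w" using h(1,2) butlast_eq_iff_nth[OF len] by simp
    then show False using bridge by (simp add: sierp_bridge_def)
  qed
  then have h_lt: "h < n - 1" using h(1) by simp
  then have last_u: "w ! h = u ! (n - 1)" using h(4) by simp
  have after_h: "\<forall>t. h < t \<and> t < n - 1 \<longrightarrow> u ! t = u ! (n - 1)"
  proof (intro allI impI)
    fix t assume "h < t \<and> t < n - 1"
    then have "u ! t = w ! h" using h(4) by auto
    then show "u ! t = u ! (n - 1)" using last_u by simp
  qed
  have "w ! t = (if t < h then u ! t else if t = h then u ! (n - 1) else u ! h)" if "t < n" for t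
  proof (cases t h rule: linorder_cases)
    case less
    then show ?thesis using h(2) by simp
  next
    case greater
    then show ?thesis using h(4) that by simp
  qed (simp add: last_u)
  moreover have "u ! h \<noteq> u ! (n - 1)" using h(3) last_u by simp
  ultimately show thesis using that h_lt after_h by blast
qed

lemma sierp_bridge_unique:
  assumes "sierp_bridge n u w" "sierp_bridge n u w'"
    and len: "length u = n" "length w = n" "length w' = n"
  shows "w = w'"
proof -
  obtain h where h: "h < n - 1" "u ! h \<noteq> u ! (n - 1)" "\<forall>t. h < t \<and> t < n - 1 \<longrightarrow> u ! t = u ! (n - 1)"
      "\<forall>t < n. w ! t = (if t < h then u ! t else if t = h then u ! (n - 1) else u ! h)"
    using sierp_bridgeD[OF assms(1) len(1,2)] by blast
  obtain h' where h': "h' < n - 1" "u ! h' \<noteq> u ! (n - 1)" "\<forall>t. h' < t \<and> t < n - 1 \<longrightarrow> u ! t = u ! (n - 1)"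
      "\<forall>t < n. w' ! t = (if t < h' then u ! t else if t = h' then u ! (n - 1) else u ! h')"
    using sierp_bridgeD[OF assms(2) len(1,3)] by blast
  \<comment> \<open>\<open>h\<close> is the last position where \<open>u\<close> differs from its last letter, so it is determined by \<open>u\<close>.\<close>
  have "h = h'"
  proof (rule linorder_cases)
    assume "h < h'"
    then show ?thesis using h(3) h'(1,2) by simp
  next
    assume "h' < h"
    then show ?thesis using h'(3) h(1,2) by simp
  qed
  then show ?thesis
    using h(4) h'(4) len by (simp add: list_eq_iff_nth_eq)
qed

lemma sierp_bridge_unique_between_cliques:
  assumes "sierp_bridge n u w" "sierp_bridge n u' w'"
    and len: "length u = n" "length w = n" "length u' = n" "length w' = n"
    and cliques: "butlast u' = butlast u" "butlast w' = butlast w"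
  shows "u' = u"
proof -
  obtain h where h: "h < n - 1" "u ! h \<noteq> u ! (n - 1)"
      "\<forall>t < n. w ! t = (if t < h then u ! t else if t = h then u ! (n - 1) else u ! h)"
    using sierp_bridgeD[OF assms(1) len(1,2)] by blast
  obtain h' where h': "h' < n - 1" "u' ! h' \<noteq> u' ! (n - 1)"
      "\<forall>t < n. w' ! t = (if t < h' then u' ! t else if t = h' then u' ! (n - 1) else u' ! h')"
    using sierp_bridgeD[OF assms(2) len(3,4)] by blast
  have u: "\<forall>t < n - 1. u' ! t = u ! t" and w: "\<forall>t < n - 1. w' ! t = w ! t"
    using cliques len butlast_eq_iff_nth by blast+
  have "h = h'"
  proof (rule linorder_cases)
    assume "h < h'"
    then have "w' ! h = u' ! h" "w ! h = u ! (n - 1)" using h(1,3) h'(1,3) by simp_all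
    then show ?thesis using h(1,2) u w by simp
  next
    assume "h' < h"
    then have "w ! h' = u ! h'" "w' ! h' = u' ! (n - 1)" using h(1,3) h'(1,3) by simp_all
    then show ?thesis using h'(1,2) u w by simp
  qed
  then have "u' ! (n - 1) = w' ! h" using h'(1,3) by simp
  also have "\<dots> = w ! h" using h(1) w by simp
  also have "\<dots> = u ! (n - 1)" using h(1,3) by simp
  finally have "u' ! (n - 1) = u ! (n - 1)" .
  moreover have "n \<ge> 1" using h by simp
  ultimately show ?thesis
    using cliques(1) len eq_iff_butlast_eq_and_last by blast
qed

lemma sierp_not_bridge_replicate:
  assumes "length w = n"
  shows "\<not> sierp_bridge n (replicate n c) w"
proof
  assume "sierp_bridge n (replicate n c) w"
  then obtain h where "h < n - 1" "replicate n c ! h \<noteq> replicate n c ! (n - 1)"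
    using sierp_bridgeD assms by (metis length_replicate)
  then show False by simp
qed

lemma sierp_bridge_exists:
  assumes u: "u \<in> sierp_V p n" and nonconst: "\<forall>c. u \<noteq> replicate n c"
  obtains w where "w \<in> sierp_V p n" "sierp_bridge n u w"
proof -
  have len: "length u = n" using u by (rule sierp_V_length)
  define c where "c = u ! (n - 1)"
  define I where "I = {i. i < n \<and> u ! i \<noteq> c}"
  define h where "h = Max I"
  have "I \<noteq> {}"
    using nonconst len by (auto simp: I_def list_eq_iff_nth_eq)
  moreover have "finite I" by (simp add: I_def)
  ultimately have "h \<in> I" "\<forall>t\<in>I. t \<le> h" by (simp_all add: h_def)
  then have h: "h < n" "u ! h \<noteq> c" and after_h: "\<forall>t. h < t \<and> t < n \<longrightarrow> u ! t = c"
    by (auto simp: I_def leD)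
  have "h \<noteq> n - 1" using h(2) by (auto simp: c_def)
  then have h_lt: "h < n - 1" using h(1) by simp
  define w where "w = map (\<lambda>t. if t < h then u ! t else if t = h then c else u ! h) [0..<n]"
  have w: "length w = n" "\<forall>t<n. w ! t = (if t < h then u ! t else if t = h then c else u ! h)"
    by (simp_all add: w_def)
  have "set w \<subseteq> set u"
    using h len by (auto simp: w_def c_def)
  then have "w \<in> sierp_V p n"
    using u w(1) by (auto simp: sierp_V_def)
  moreover have "sierp_adj n u w"
    unfolding sierp_adj_def using h after_h w by (intro exI[of _ h]) auto
  moreover have "butlast u \<noteq> butlast w"
    using butlast_eq_iff_nth[OF len w(1)] h_lt h(2) w(2) by auto
  ultimately show thesis
    by (intro that) (auto simp: sierp_bridge_def)
qed

lemma sierp_mates_exist: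
  assumes p: "p \<ge> 3" and x: "x \<in> sierp_V p n" and n: "n \<ge> 1"
  obtains a b where "a \<in> sierp_V p n" "b \<in> sierp_V p n"
    "butlast a = butlast x" "butlast b = butlast x" "distinct [x, a, b]"
proof -
  have x_ne: "x \<noteq> []" using x n by (auto simp: sierp_V_def)
  have "last x \<in> set x" using x_ne by simp
  then have l: "last x < p" using x by (auto simp: sierp_V_def)
  define a where "a = butlast x @ [(last x + 1) mod p]"
  define b where "b = butlast x @ [(last x + 2) mod p]"
  have "set (butlast x) \<subseteq> {0..<p}" using x in_set_butlastD by (fastforce simp: sierp_V_def)
  then have "a \<in> sierp_V p n" "b \<in> sierp_V p n"
    using x x_ne p unfolding a_def b_def sierp_V_def by auto
  moreover have "last a \<noteq> last x" "last b \<noteq> last x" "last a \<noteq> last b"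
    using l p by (auto simp: a_def b_def mod_if)
  then have "distinct [x, a, b]" by auto
  moreover have "butlast a = butlast x" "butlast b = butlast x" by (simp_all add: a_def b_def)
  ultimately show thesis using that by blast
qed

lemma sierp_nonconst_mate_exists:
  assumes p: "p \<ge> 3" and x: "x \<in> sierp_V p n" and nonconst: "\<forall>c. x \<noteq> replicate n c"
  obtains a where "a \<in> sierp_V p n" "butlast a = butlast x" "a \<noteq> x" "\<forall>c. a \<noteq> replicate n c"
proof -
  have len: "length x = n" using x by (rule sierp_V_length)
  have n: "n \<ge> 2"
  proof (rule ccontr)
    assume "\<not> n \<ge> 2"
    then have "\<forall>i<n. i = 0" by auto
    then have "x = replicate n (x ! 0)"
      using len by (auto simp: list_eq_iff_nth_eq)
    then show False using nonconst by blast
  qed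
  obtain a b where ab: "a \<in> sierp_V p n" "b \<in> sierp_V p n"
      "butlast a = butlast x" "butlast b = butlast x" "distinct [x, a, b]"
    using sierp_mates_exist[OF p x] n by auto
  \<comment> \<open>Two distinct constant words differ already in their first letter, hence in their butlast.\<close>
  have "\<not> ((\<exists>c. a = replicate n c) \<and> (\<exists>c. b = replicate n c))"
  proof
    assume "(\<exists>c. a = replicate n c) \<and> (\<exists>c. b = replicate n c)"
    moreover have "butlast a ! 0 = butlast b ! 0" using ab by simp
    ultimately have "a = b" using n by (auto simp: nth_butlast)
    then show False using ab by simp
  qed
  then show thesis
    using ab that by auto
qed

lemma sierp_common_neighbour_cases:
  assumes "sierp_adj n u w" "sierp_adj n w v" "butlast u \<noteq> butlast v"
    and len: "length u = n" "length v = n" "length w = n"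
  shows "butlast w = butlast u \<and> sierp_bridge n w v \<or> butlast w = butlast v \<and> sierp_bridge n w u"
proof (rule ccontr)
  assume "\<not> ?thesis"
  with assms have "sierp_bridge n w u" "sierp_bridge n w v"
    by (auto simp: sierp_bridge_def intro: sierp_adj_sym)
  then have "u = v" using sierp_bridge_unique len by blast
  then show False using assms by simp
qed

lemma sierp_shortest_path_mate_bridge:
  assumes V: "a \<in> sierp_V p n" "x \<in> sierp_V p n" "y \<in> sierp_V p n"
    and mate: "butlast a = butlast x" "a \<noteq> x" and bridge: "sierp_bridge n x y"
  shows "is_shortest_path (sierp_V p n) (sierp_adj n) a y [a, x, y]"
proof -
  have len: "length a = n" "length x = n" "length y = n" using V by (simp_all add: sierp_V_length)
  have "\<not> sierp_adj n a y"
  proof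
    assume "sierp_adj n a y"
    then have "sierp_bridge n y a" "sierp_bridge n y x"
      using mate bridge by (auto simp: sierp_bridge_def intro: sierp_adj_sym)
    then show False using len mate(2) sierp_bridge_unique by blast
  qed
  then show ?thesis
    using V len mate bridge
    by (intro is_shortest_path_3I) (auto simp: sierp_bridge_def sierp_adj_irrefl sierp_adj_if_butlast_eq)
qed

lemma sierp_shortest_path_mate_bridge_mate:
  assumes V: "a \<in> sierp_V p n" "x \<in> sierp_V p n" "y \<in> sierp_V p n" "c \<in> sierp_V p n"
    and mate_a: "butlast a = butlast x" "a \<noteq> x" and bridge: "sierp_bridge n x y"
    and mate_c: "butlast c = butlast y" "c \<noteq> y"
  shows "is_shortest_path (sierp_V p n) (sierp_adj n) a c [a, x, y, c]"
proof -
  have len: "length a = n" "length x = n" "length y = n" "length c = n"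
    using V by (simp_all add: sierp_V_length)
  have cliques: "butlast a \<noteq> butlast c" using mate_a mate_c bridge by (simp add: sierp_bridge_def)
  have "\<not> sierp_adj n a c"
  proof
    assume "sierp_adj n a c"
    then have "sierp_bridge n a c" using cliques by (simp add: sierp_bridge_def)
    then show False
      using sierp_bridge_unique_between_cliques[OF bridge] len mate_a mate_c by blast
  qed
  moreover have False if w: "w \<in> sierp_V p n" "sierp_adj n a w" "sierp_adj n w c" for w
  proof -
    have "length w = n" using w(1) by (rule sierp_V_length)
    then consider "butlast w = butlast a" "sierp_bridge n w c" | "butlast w = butlast c" "sierp_bridge n w a"
      using sierp_common_neighbour_cases w(2,3) cliques len by blast
    then show False
    proof cases
      case 1
      then have "c = y"
        using sierp_bridge_unique_between_cliques[OF sierp_bridge_sym[OF bridge] sierp_bridge_sym]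
          len \<open>length w = n\<close> mate_a mate_c by metis
      then show False using mate_c by simp
    next
      case 2
      then have "a = x"
        using sierp_bridge_unique_between_cliques[OF bridge sierp_bridge_sym]
          len \<open>length w = n\<close> mate_a mate_c by metis
      then show False using mate_a by simp
    qed
  qed
  ultimately show ?thesis
    using V len mate_a mate_c bridge cliques
    by (intro is_shortest_path_4I)
      (auto simp: sierp_bridge_def sierp_adj_irrefl sierp_adj_if_butlast_eq intro: sierp_adj_sym)
qed

lemma sierp_shortest_path_bridge_mate_bridge:
  assumes V: "y \<in> sierp_V p n" "x \<in> sierp_V p n" "a \<in> sierp_V p n" "z \<in> sierp_V p n"
    and bridge_x: "sierp_bridge n x y" and mate: "butlast a = butlast x" "a \<noteq> x"
    and bridge_a: "sierp_bridge n a z"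
  shows "is_shortest_path (sierp_V p n) (sierp_adj n) y z [y, x, a, z]"
proof -
  have len: "length y = n" "length x = n" "length a = n" "length z = n"
    using V by (simp_all add: sierp_V_length)
  have cliques: "butlast y \<noteq> butlast z"
    using sierp_bridge_unique_between_cliques[OF bridge_x bridge_a] len mate by metis
  have "\<not> sierp_adj n y z"
  proof
    assume "sierp_adj n y z"
    then have "sierp_bridge n y z" using cliques by (simp add: sierp_bridge_def)
    then have "z = x" using sierp_bridge_unique sierp_bridge_sym[OF bridge_x] len by blast
    then show False using bridge_a mate by (simp add: sierp_bridge_def)
  qed
  moreover have False if w: "w \<in> sierp_V p n" "sierp_adj n y w" "sierp_adj n w z" for w
  proof -
    have "length w = n" using w(1) by (rule sierp_V_length)
    then consider "butlast w = butlast y" "sierp_bridge n w z" | "butlast w = butlast z" "sierp_bridge n w y"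
      using sierp_common_neighbour_cases w(2,3) cliques len by blast
    then show False
    proof cases
      case 1
      then have "w = a"
        using sierp_bridge_unique sierp_bridge_sym[OF bridge_a] sierp_bridge_sym len \<open>length w = n\<close>
        by metis
      then show False using 1 mate bridge_x by (simp add: sierp_bridge_def)
    next
      case 2
      then have "w = x"
        using sierp_bridge_unique sierp_bridge_sym[OF bridge_x] sierp_bridge_sym len \<open>length w = n\<close>
        by metis
      then show False using 2 mate bridge_a by (simp add: sierp_bridge_def)
    qed
  qed
  ultimately show ?thesis
    using V len mate bridge_x bridge_a cliques
    by (intro is_shortest_path_4I)
      (auto simp: sierp_bridge_def sierp_adj_irrefl sierp_adj_if_butlast_eq intro: sierp_adj_sym)
qed

section \<open>General position sets of Sierpinski graphs\<close>

definition sierp_extremes :: "nat \<Rightarrow> nat \<Rightarrow> nat list set" where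
  "sierp_extremes p n = (\<lambda>c. replicate n c) ` {0..<p}"

lemma card_sierp_extremes: "n \<ge> 1 \<Longrightarrow> card (sierp_extremes p n) = p"
  unfolding sierp_extremes_def by (subst card_image) (auto simp: inj_on_def)

lemma replicate_in_sierp_extremes:
  assumes "replicate n c \<in> sierp_V p n" "n \<ge> 1"
  shows "replicate n c \<in> sierp_extremes p n"
  using assms by (auto simp: sierp_extremes_def sierp_V_def)

lemma simplicial_sierp_replicate: "simplicial (sierp_V p n) (sierp_adj n) (replicate n c)"
  unfolding simplicial_def
proof (intro ballI impI)
  fix a b assume V: "a \<in> sierp_V p n" "b \<in> sierp_V p n"
    and adj: "sierp_adj n a (replicate n c)" "sierp_adj n (replicate n c) b" and "a \<noteq> b"
  have len: "length a = n" "length b = n" using V by (simp_all add: sierp_V_length)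
  have "\<not> sierp_bridge n (replicate n c) a" "\<not> sierp_bridge n (replicate n c) b"
    using len by (simp_all add: sierp_not_bridge_replicate)
  then have "butlast a = butlast b"
    using sierp_adj_sym[OF adj(1)] adj(2) unfolding sierp_bridge_def by simp
  then show "sierp_adj n a b"
    using len \<open>a \<noteq> b\<close> by (simp add: sierp_adj_if_butlast_eq)
qed

lemma total_gp_set_sierp_extremes: "total_gp_set (sierp_V p n) (sierp_adj n) (sierp_extremes p n)"
  unfolding total_gp_set_def positionable_def
proof (intro conjI ballI allI impI subsetI)
  show "x \<in> sierp_V p n" if "x \<in> sierp_extremes p n" for x
    using that by (auto simp: sierp_extremes_def sierp_V_def)
  fix u v P z assume "is_shortest_path (sierp_V p n) (sierp_adj n) u v P" "z \<in> set P \<inter> sierp_extremes p n"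
  then show "z \<in> {u, v}"
    using shortest_path_simplicial_endpoint simplicial_sierp_replicate
    by (fastforce simp: sierp_extremes_def)
qed

lemma sierp_total_gp_set_replicate:
  assumes p: "p \<ge> 3" and X: "total_gp_set (sierp_V p n) (sierp_adj n) X" and "x \<in> X"
  shows "\<exists>c. x = replicate n c"
proof (rule ccontr)
  assume nonconst: "\<not> ?thesis"
  have x: "x \<in> sierp_V p n" using X \<open>x \<in> X\<close> by (auto simp: total_gp_set_def)
  obtain y where y: "y \<in> sierp_V p n" "sierp_bridge n x y"
    using sierp_bridge_exists x nonconst by blast
  obtain a where a: "a \<in> sierp_V p n" "butlast a = butlast x" "a \<noteq> x"
    using sierp_nonconst_mate_exists[OF p x] nonconst by blast
  have "is_shortest_path (sierp_V p n) (sierp_adj n) a y [a, x, y]"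
    using sierp_shortest_path_mate_bridge a x y by blast
  moreover have "positionable (sierp_V p n) (sierp_adj n) X a y"
    using X a(1) y(1) by (simp add: total_gp_set_def)
  ultimately have "x \<notin> X"
    using positionable_interiorD a(3) y(2) by (fastforce simp: sierp_bridge_def sierp_adj_irrefl)
  then show False using \<open>x \<in> X\<close> by simp
qed

lemma sierp_dual_gp_set_replicate:
  assumes p: "p \<ge> 3" and X: "dual_gp_set (sierp_V p n) (sierp_adj n) X" and "x \<in> X"
  shows "\<exists>c. x = replicate n c"
proof (rule ccontr)
  assume nonconst: "\<not> ?thesis"
  have x: "x \<in> sierp_V p n" using X \<open>x \<in> X\<close> by (auto simp: dual_gp_set_def)
  have n: "n \<ge> 1" using nonconst x by (cases n) (auto simp: sierp_V_def)
  obtain y where y: "y \<in> sierp_V p n" "sierp_bridge n x y"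
    using sierp_bridge_exists x nonconst by blast
  obtain a where a: "a \<in> sierp_V p n" "butlast a = butlast x" "a \<noteq> x"
    and a_nonconst: "\<forall>c. a \<noteq> replicate n c"
    using sierp_nonconst_mate_exists[OF p x] nonconst by blast
  have x_ne_y: "x \<noteq> y" using y(2) by (auto simp: sierp_bridge_def sierp_adj_irrefl)
  have a_y: "a \<in> X \<longleftrightarrow> y \<notin> X"
    using dual_gp_set_shortest_path_interior[OF X sierp_shortest_path_mate_bridge[OF a(1) x y(1) a(2,3) y(2)]]
      \<open>x \<in> X\<close> a(3) x_ne_y by auto
  show False
  proof (cases "y \<in> X")
    case True
    obtain c where c: "c \<in> sierp_V p n" "butlast c = butlast y" "c \<noteq> y"
      using sierp_mates_exist[OF p y(1) n] by (metis distinct_length_2_or_more)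
    have x_ne_c: "x \<noteq> c" using c(2) y(2) by (auto simp: sierp_bridge_def)
    have "c \<in> X \<longleftrightarrow> x \<notin> X"
      using dual_gp_set_shortest_path_interior[OF X
          sierp_shortest_path_mate_bridge[OF c(1) y(1) x c(2,3) sierp_bridge_sym[OF y(2)]]]
        True c(3) x_ne_y by auto
    moreover have "a \<in> X \<longleftrightarrow> c \<notin> X"
      using dual_gp_set_shortest_path_interior[OF X
          sierp_shortest_path_mate_bridge_mate[OF a(1) x y(1) c(1) a(2,3) y(2) c(2,3)]]
        \<open>x \<in> X\<close> a(3) x_ne_c by auto
    ultimately show False using a_y True \<open>x \<in> X\<close> by blast
  next
    case False
    obtain z where z: "z \<in> sierp_V p n" "sierp_bridge n a z"
      using sierp_bridge_exists a(1) a_nonconst by blast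
    have "x \<noteq> z" "a \<noteq> z" using a(2) z(2) by (auto simp: sierp_bridge_def)
    have "x \<in> X \<longleftrightarrow> z \<notin> X"
      using dual_gp_set_shortest_path_interior[OF X
          sierp_shortest_path_mate_bridge[OF x a(1) z(1) a(2)[symmetric] a(3)[symmetric] z(2)]]
        a_y False a(3) \<open>a \<noteq> z\<close> by auto
    moreover have "y \<in> X \<longleftrightarrow> z \<notin> X"
      using dual_gp_set_shortest_path_interior[OF X
          sierp_shortest_path_bridge_mate_bridge[OF y(1) x a(1) z(1) y(2) a(2,3) z(2)]]
        \<open>x \<in> X\<close> x_ne_y \<open>x \<noteq> z\<close> by auto
    ultimately show False using False \<open>x \<in> X\<close> by blast
  qed
qed

lemma sierp_total_gp_set_iff:
  assumes "p \<ge> 3" "n \<ge> 1"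
  shows "total_gp_set (sierp_V p n) (sierp_adj n) X \<longleftrightarrow> X \<subseteq> sierp_extremes p n"
proof
  assume X: "total_gp_set (sierp_V p n) (sierp_adj n) X"
  show "X \<subseteq> sierp_extremes p n"
  proof
    fix x assume "x \<in> X"
    moreover have "x \<in> sierp_V p n" using X \<open>x \<in> X\<close> by (auto simp: total_gp_set_def)
    ultimately show "x \<in> sierp_extremes p n"
      using sierp_total_gp_set_replicate[OF assms(1) X] replicate_in_sierp_extremes assms(2) by blast
  qed
qed (rule total_gp_set_subset[OF total_gp_set_sierp_extremes])

lemma sierp_dual_gp_set_iff:
  assumes "p \<ge> 3" "n \<ge> 1"
  shows "dual_gp_set (sierp_V p n) (sierp_adj n) X \<longleftrightarrow> X \<subseteq> sierp_extremes p n"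
proof
  assume X: "dual_gp_set (sierp_V p n) (sierp_adj n) X"
  show "X \<subseteq> sierp_extremes p n"
  proof
    fix x assume "x \<in> X"
    moreover have "x \<in> sierp_V p n" using X \<open>x \<in> X\<close> by (auto simp: dual_gp_set_def)
    ultimately show "x \<in> sierp_extremes p n"
      using sierp_dual_gp_set_replicate[OF assms(1) X] replicate_in_sierp_extremes assms(2) by blast
  qed
qed (rule dual_gp_set_if_total_gp_set[OF total_gp_set_subset[OF total_gp_set_sierp_extremes]])

lemma Max_card_subsets: "finite E \<Longrightarrow> Max (card ` {X. X \<subseteq> E}) = card E"
  by (rule Max_eqI) (auto intro: card_mono)

lemma card_subsets_of_full_card: "finite E \<Longrightarrow> card {X. X \<subseteq> E \<and> card X = card E} = 1"
proof -
  assume "finite E"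
  then have "{X. X \<subseteq> E \<and> card X = card E} = {E}" using card_subset_eq by blast
  then show ?thesis by simp
qed

theorem corollary4p2:
  fixes n :: nat
  assumes "n \<ge> 1"
  shows "gp_t (sierp_V 3 n) (sierp_adj n) = 3 \<and> gp_d (sierp_V 3 n) (sierp_adj n) = 3 \<and>
         num_gp_t (sierp_V 3 n) (sierp_adj n) = 1 \<and> num_gp_d (sierp_V 3 n) (sierp_adj n) = 1"
proof -
  let ?V = "sierp_V 3 n" and ?A = "sierp_adj n" and ?E = "sierp_extremes 3 n"
  have finite: "finite ?E" by (simp add: sierp_extremes_def)
  have card: "card ?E = 3" using assms by (rule card_sierp_extremes)
  have total: "total_gp_set ?V ?A X \<longleftrightarrow> X \<subseteq> ?E"
    and dual: "dual_gp_set ?V ?A X \<longleftrightarrow> X \<subseteq> ?E" for X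
    using assms by (simp_all add: sierp_total_gp_set_iff sierp_dual_gp_set_iff)
  have "gp_t ?V ?A = 3" "gp_d ?V ?A = 3"
    unfolding gp_t_def gp_d_def total dual Max_card_subsets[OF finite] card by simp_all
  then show ?thesis
    unfolding num_gp_t_def num_gp_d_def total dual
    using card_subsets_of_full_card[OF finite] card by simp
qed

end
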